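(* Let $n\ge0$ be an integer with $\chi_n>c^2$, and let $x<y$ be two roots of $\psi_n$ in $(1,\infty)$. Then $$|\psi_n'(x)|\frac{x^2-1}{y^2-1}\le|\psi_n'(y)|\le|\psi_n'(x)|\sqrt{\frac{x^2-1}{x^2-\chi_n/c^2}\cdot\frac{y^2-\chi_n/c^2}{y^2-1}}.$$
   Context: For a real number $c>0$, let $\psi_0,\psi_1,\dots$ be the prolate spheroidal wave functions of band limit $c$: the real $L^2[-1,1]$-normalized eigenfunctions of $F_c[\varphi](x)=\int_{-1}^1\varphi(t)e^{icxt}\,dt$ with eigenvalues $\lambda_n$ ordered by $|\lambda_n|\ge|\lambda_{n+1}|$, extended to entire functions by $\lambda_n\psi_n(x)=\int_{-1}^1\psi_n(t)e^{icxt}\,dt$. $\chi_0<\chi_1<\dots$ are the positive numbers such that $\psi_n$ satisfies $(1-x^2)\psi''(x)-2x\psi'(x)+(\chi_n-c^2x^2)\psi(x)=0$ for all $x$. *)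

theory Defs
  imports "HOL-Analysis.Analysis"
begin

definition Fc :: "real \<Rightarrow> (real \<Rightarrow> real) \<Rightarrow> real \<Rightarrow> complex" where
  "Fc c \<phi> x = integral {-1..1} (\<lambda>t. complex_of_real (\<phi> t) * cis (c * x * t))"

definition Fc_eigenfun :: "real \<Rightarrow> complex \<Rightarrow> (real \<Rightarrow> real) \<Rightarrow> bool" where
  "Fc_eigenfun c \<mu> \<phi> \<longleftrightarrow>
     \<phi> measurable_on {-1..1} \<and> (\<lambda>t. (\<phi> t)\<^sup>2) integrable_on {-1..1} \<and>
     integral {-1..1} (\<lambda>t. (\<phi> t)\<^sup>2) \<noteq> 0 \<and>
     (\<forall>x\<in>{-1..1}. \<mu> * complex_of_real (\<phi> x) = Fc c \<phi> x)"

definition L2_orthonormal :: "nat \<Rightarrow> (nat \<Rightarrow> real \<Rightarrow> real) \<Rightarrow> bool" where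
  "L2_orthonormal m \<phi> \<longleftrightarrow>
     (\<forall>i<m. \<forall>j<m. integral {-1..1} (\<lambda>t. \<phi> i t * \<phi> j t) = (if i = j then 1 else 0))"

definition many_bigger_eigs :: "real \<Rightarrow> real \<Rightarrow> nat \<Rightarrow> bool" where
  "many_bigger_eigs c r m \<longleftrightarrow>
     (\<exists>\<phi> \<mu>. L2_orthonormal m \<phi> \<and> (\<forall>i<m. Fc_eigenfun c (\<mu> i) (\<phi> i) \<and> cmod (\<mu> i) > r))"

text \<open>psi is (up to sign) the n-th prolate spheroidal wave function psi_n of band limit c,
  with eigenvalue lam = lambda_n, extended to the whole real line by
  lam psi(x) = F_c[psi](x).  "n-th" in the ordering |lambda_0| >= |lambda_1| >= ... means:
  exactly n (counted with multiplicity) eigenvalues have modulus strictly larger than |lam|.\<close>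
definition is_PSWF :: "real \<Rightarrow> nat \<Rightarrow> (real \<Rightarrow> real) \<Rightarrow> complex \<Rightarrow> bool" where
  "is_PSWF c n \<psi> lam \<longleftrightarrow>
     Fc_eigenfun c lam \<psi> \<and> lam \<noteq> 0 \<and>
     integral {-1..1} (\<lambda>t. (\<psi> t)\<^sup>2) = 1 \<and>
     (\<forall>x::real. lam * complex_of_real (\<psi> x) = Fc c \<psi> x) \<and>
     many_bigger_eigs c (cmod lam) n \<and> \<not> many_bigger_eigs c (cmod lam) (Suc n)"

definition prolate_ode :: "real \<Rightarrow> real \<Rightarrow> (real \<Rightarrow> real) \<Rightarrow> bool" where
  "prolate_ode c chi \<psi> \<longleftrightarrow>
     (\<forall>x::real. (1 - x\<^sup>2) * deriv (deriv \<psi>) x - 2 * x * deriv \<psi> x + (chi - c\<^sup>2 * x\<^sup>2) * \<psi> x = 0)"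

end

theory Submission
  imports Defs "HOL-Complex_Analysis.Complex_Analysis"
begin

text \<open>\<open>\<psi>\<close> is the restriction to the real line of the entire function \<open>z \<mapsto> F\<^sub>c[\<psi>](z) / \<lambda>\<close>,
  so it is smooth and cannot vanish on an interval without vanishing identically.
  In Sturm form the prolate equation reads \<open>((t\<^sup>2 - 1) \<psi>')' = (chi - c\<^sup>2 t\<^sup>2) \<psi>\<close>.
  Multiplying by \<open>\<psi>\<close> shows that \<open>(t\<^sup>2 - 1) \<psi> \<psi>'\<close> is nondecreasing below the turning point
  \<open>\<surd>chi / c\<close>; a root \<open>x > 1\<close> there would force \<open>\<psi>' = 0\<close> on \<open>(1, x)\<close>, so all roots in \<open>(1, \<infinity>)\<close>
  lie beyond the turning point. There \<open>R = (t\<^sup>2 - 1)(c\<^sup>2 t\<^sup>2 - chi)\<close> is positive and increasing,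
  so with \<open>P = (t\<^sup>2 - 1) \<psi>'\<close> the function \<open>P\<^sup>2 + R \<psi>\<^sup>2\<close> is nondecreasing and \<open>P\<^sup>2 / R + \<psi>\<^sup>2\<close> is
  nonincreasing. At the roots \<open>x < y\<close> only the \<open>P\<close>-terms survive, which gives the lower and the
  upper bound respectively.\<close>

lemma norm_cis_diff_le: "norm (cis a - cis b) \<le> \<bar>a - b\<bar>"
proof -
  have "(norm (cis a - cis b))\<^sup>2 = (cos a - cos b)\<^sup>2 + (sin a - sin b)\<^sup>2"
    by (simp add: cmod_power2 cis.ctr)
  also have "\<dots> = 2 - 2 * cos (a - b)"
    by (simp add: cos_diff power2_eq_square algebra_simps)
  also have "cos (a - b) = 1 - 2 * (sin ((a - b) / 2))\<^sup>2"
    using cos_double_sin[of "(a - b) / 2"] by (simp add: diff_divide_distrib)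
  finally have "(norm (cis a - cis b))\<^sup>2 = (2 * sin ((a - b) / 2))\<^sup>2"
    by (simp add: power_mult_distrib)
  then have "norm (cis a - cis b) = \<bar>2 * sin ((a - b) / 2)\<bar>"
    by (metis norm_ge_zero power2_eq_iff_nonneg abs_ge_zero power2_abs)
  also have "\<dots> \<le> \<bar>a - b\<bar>"
    using abs_sin_x_le_abs_x[of "(a - b) / 2"] by simp
  finally show ?thesis .
qed

lemma abs_le_one_plus_square: "\<bar>u\<bar> \<le> 1 + (u::real)\<^sup>2"
proof -
  have "0 \<le> (\<bar>u\<bar> - 1/2)\<^sup>2" by simp
  then show ?thesis by (simp add: power2_eq_square algebra_simps)
qed

lemma square_integrable_imp_absolutely_integrable:
  fixes f :: "real \<Rightarrow> real"
  assumes "f measurable_on {a..b}" "(\<lambda>t. (f t)\<^sup>2) integrable_on {a..b}"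
  shows "f absolutely_integrable_on {a..b}"
proof (rule measurable_bounded_by_integrable_imp_absolutely_integrable)
  show "f \<in> borel_measurable (lebesgue_on {a..b})"
    using assms(1) by (simp add: measurable_on_iff_borel_measurable)
  show "(\<lambda>t. 1 + (f t)\<^sup>2) integrable_on {a..b}"
    using assms(2) by (intro integrable_add integrable_const_ivl)
qed (auto intro: abs_le_one_plus_square)

lemma integrable_of_real_mult_cis:
  fixes f :: "real \<Rightarrow> real"
  assumes f: "f absolutely_integrable_on {a..b}"
  shows "(\<lambda>t. complex_of_real (f t) * cis (w * t)) integrable_on {a..b}"
proof -
  have "(\<lambda>t. cis (w * t) * complex_of_real (f t)) absolutely_integrable_on {a..b}"
  proof (rule absolutely_integrable_bounded_measurable_product[OF bilinear_times])
    show "(\<lambda>t. cis (w * t)) \<in> borel_measurable (lebesgue_on {a..b})"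
      by (intro continuous_imp_measurable_on_sets_lebesgue continuous_intros) auto
    show "bounded ((\<lambda>t. cis (w * t)) ` {a..b})"
      by (auto simp: bounded_iff intro!: exI[of _ 1])
    show "(\<lambda>t. complex_of_real (f t)) absolutely_integrable_on {a..b}"
      using absolutely_integrable_linear[OF f bounded_linear_of_real] by (simp add: o_def)
  qed auto
  then show ?thesis
    by (simp add: mult.commute set_lebesgue_integral_eq_integral(1))
qed

lemma lipschitz_on_Fc:
  fixes f :: "real \<Rightarrow> real"
  assumes f: "f absolutely_integrable_on {-1..1}"
  shows "lipschitz_on (\<bar>c\<bar> * integral {-1..1} (\<lambda>t. \<bar>f t\<bar>)) UNIV (Fc c f)"
proof (rule lipschitz_onI)
  note kernel_int = integrable_of_real_mult_cis[OF f]
  have abs_int: "(\<lambda>t. \<bar>f t\<bar>) integrable_on {-1..1}"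
    using f by (simp add: absolutely_integrable_on_def)
  fix x y :: real
  have "dist (Fc c f x) (Fc c f y)
      = norm (integral {-1..1} (\<lambda>t. complex_of_real (f t) * (cis (c * x * t) - cis (c * y * t))))"
    unfolding Fc_def dist_norm
    by (simp add: integral_diff[OF kernel_int kernel_int, symmetric] right_diff_distrib)
  also have "\<dots> \<le> integral {-1..1} (\<lambda>t. \<bar>f t\<bar> * (\<bar>c\<bar> * dist x y))"
  proof (rule integral_norm_bound_integral)
    show "(\<lambda>t. complex_of_real (f t) * (cis (c * x * t) - cis (c * y * t))) integrable_on {-1..1}"
      using integrable_diff[OF kernel_int kernel_int] by (simp add: right_diff_distrib)
    show "(\<lambda>t. \<bar>f t\<bar> * (\<bar>c\<bar> * dist x y)) integrable_on {-1..1}"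
      using abs_int by (rule integrable_on_mult_left)
    fix t :: real
    assume "t \<in> {-1..1}"
    have "\<bar>c * x * t - c * y * t\<bar> = \<bar>c\<bar> * dist x y * \<bar>t\<bar>"
      unfolding dist_real_def abs_mult[symmetric] by (simp add: algebra_simps)
    also have "\<dots> \<le> \<bar>c\<bar> * dist x y"
      using \<open>t \<in> {-1..1}\<close> by (intro mult_left_le) auto
    finally have "\<bar>c * x * t - c * y * t\<bar> \<le> \<bar>c\<bar> * dist x y" .
    then show "norm (complex_of_real (f t) * (cis (c * x * t) - cis (c * y * t)))
        \<le> \<bar>f t\<bar> * (\<bar>c\<bar> * dist x y)"
      unfolding norm_mult norm_of_real
      by (intro mult_left_mono order.trans[OF norm_cis_diff_le]) auto
  qed
  also have "\<dots> = \<bar>c\<bar> * integral {-1..1} (\<lambda>t. \<bar>f t\<bar>) * dist x y"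
    by (simp add: integral_mult_left ac_simps)
  finally show "dist (Fc c f x) (Fc c f y) \<le> \<bar>c\<bar> * integral {-1..1} (\<lambda>t. \<bar>f t\<bar>) * dist x y" .
  show "0 \<le> \<bar>c\<bar> * integral {-1..1} (\<lambda>t. \<bar>f t\<bar>)"
    by (simp add: abs_int integral_nonneg)
qed

lemma continuous_on_Fc_eigenfun:
  assumes "Fc_eigenfun c lam f" "lam \<noteq> 0" "\<And>x. lam * complex_of_real (f x) = Fc c f x"
  shows "continuous_on UNIV f"
proof -
  have "f absolutely_integrable_on {-1..1}"
    using assms(1) unfolding Fc_eigenfun_def
    by (intro square_integrable_imp_absolutely_integrable) auto
  then have "continuous_on UNIV (Fc c f)"
    by (rule lipschitz_on_continuous_on[OF lipschitz_on_Fc])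
  then have "continuous_on UNIV (\<lambda>x. Re (Fc c f x / lam))"
    by (intro continuous_intros) (use assms(2) in auto)
  moreover have "f x = Re (Fc c f x / lam)" for x
  proof -
    have "complex_of_real (f x) = Fc c f x / lam"
      using assms(2) assms(3)[of x] by (simp add: field_simps)
    then show ?thesis
      by (metis Re_complex_of_real)
  qed
  ultimately show ?thesis
    by simp
qed

definition Fc_complex :: "real \<Rightarrow> (real \<Rightarrow> real) \<Rightarrow> complex \<Rightarrow> complex" where
  "Fc_complex c f z = integral {-1..1} (\<lambda>t. complex_of_real (f t) * exp (\<i> * (of_real c * z * of_real t)))"

lemma Fc_complex_of_real: "Fc_complex c f (complex_of_real x) = Fc c f x"
  unfolding Fc_complex_def Fc_def by (simp add: cis_conv_exp)

lemma holomorphic_Fc_complex: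
  assumes f: "continuous_on {-1..1} f"
  shows "Fc_complex c f holomorphic_on UNIV"
  unfolding Fc_complex_def cbox_interval[symmetric]
proof (rule leibniz_rule_holomorphic[where fx = "\<lambda>z t. complex_of_real (f t) *
    (exp (\<i> * (of_real c * z * of_real t)) * (\<i> * (of_real c * of_real t)))"])
  show "((\<lambda>z. complex_of_real (f t) * exp (\<i> * (of_real c * z * of_real t))) has_field_derivative
      complex_of_real (f t) * (exp (\<i> * (of_real c * z * of_real t)) * (\<i> * (of_real c * of_real t))))
      (at z within UNIV)" for z t
    by (auto intro!: derivative_eq_intros)
  show "(\<lambda>t. complex_of_real (f t) * exp (\<i> * (of_real c * z * of_real t))) integrable_on cbox (-1) 1" for z
    using f by (intro integrable_continuous continuous_intros) auto
  have "continuous_on (UNIV \<times> {-1..1}) (\<lambda>p. complex_of_real (f (snd p)) *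
      (exp (\<i> * (of_real c * fst p * of_real (snd p))) * (\<i> * (of_real c * of_real (snd p)))))"
    by (intro continuous_intros continuous_on_compose2[OF f continuous_on_snd]) auto
  then show "continuous_on (UNIV \<times> cbox (-1) 1) (\<lambda>(z, t). complex_of_real (f t) *
      (exp (\<i> * (of_real c * z * of_real t)) * (\<i> * (of_real c * of_real t))))"
    by (simp add: case_prod_beta)
qed auto

lemma PSWF_entire_extension:
  assumes "is_PSWF c n \<psi> lam"
  shows "(\<lambda>z. Fc_complex c \<psi> z / lam) holomorphic_on UNIV"
    and "Fc_complex c \<psi> (complex_of_real t) / lam = complex_of_real (\<psi> t)"
proof -
  have eig: "Fc_eigenfun c lam \<psi>" and lam: "lam \<noteq> 0"
    and ext: "\<And>x. lam * complex_of_real (\<psi> x) = Fc c \<psi> x"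
    using assms unfolding is_PSWF_def by blast+
  have "continuous_on {-1..1} \<psi>"
    using continuous_on_Fc_eigenfun[OF eig lam ext] by (rule continuous_on_subset) simp
  then have "Fc_complex c \<psi> holomorphic_on UNIV"
    by (rule holomorphic_Fc_complex)
  then show "(\<lambda>z. Fc_complex c \<psi> z / lam) holomorphic_on UNIV"
    by (rule holomorphic_on_divide[OF _ holomorphic_on_const]) (use lam in auto)
  show "Fc_complex c \<psi> (complex_of_real t) / lam = complex_of_real (\<psi> t)"
    unfolding Fc_complex_of_real ext[symmetric] using lam by simp
qed

lemma has_real_derivative_Re_of_real:
  assumes "(\<Psi> has_field_derivative D) (at (complex_of_real x))"
  shows "((\<lambda>t. Re (\<Psi> (complex_of_real t))) has_real_derivative Re D) (at x)"
  using has_field_derivative_Re[OF has_vector_derivative_real_field[OF assms]] by simp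

lemma real_restriction_of_entire_has_derivatives:
  fixes \<Psi> :: "complex \<Rightarrow> complex" and f :: "real \<Rightarrow> real"
  assumes \<Psi>: "\<Psi> holomorphic_on UNIV" and f: "\<And>t. \<Psi> (complex_of_real t) = complex_of_real (f t)"
  shows "(f has_real_derivative deriv f t) (at t)"
    and "(deriv f has_real_derivative deriv (deriv f) t) (at t)"
proof -
  have d\<Psi>: "deriv \<Psi> holomorphic_on UNIV"
    using \<Psi> by (rule holomorphic_deriv) simp
  have f_eq: "f = (\<lambda>t. Re (\<Psi> (complex_of_real t)))"
    using f by (simp add: fun_eq_iff)
  have f': "(f has_real_derivative Re (deriv \<Psi> (complex_of_real s))) (at s)" for s
    unfolding f_eq by (intro has_real_derivative_Re_of_real holomorphic_derivI[OF \<Psi>]) auto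
  then have deriv_f: "deriv f = (\<lambda>s. Re (deriv \<Psi> (complex_of_real s)))"
    by (simp add: DERIV_imp_deriv fun_eq_iff)
  show "(f has_real_derivative deriv f t) (at t)"
    using f' by (simp add: deriv_f)
  have f'': "(deriv f has_real_derivative Re (deriv (deriv \<Psi>) (complex_of_real s))) (at s)" for s
    unfolding deriv_f by (intro has_real_derivative_Re_of_real holomorphic_derivI[OF d\<Psi>]) auto
  then show "(deriv f has_real_derivative deriv (deriv f) t) (at t)"
    unfolding DERIV_imp_deriv[OF f''[of t]] .
qed

lemma real_restriction_of_entire_eq_0:
  fixes \<Psi> :: "complex \<Rightarrow> complex" and f :: "real \<Rightarrow> real"
  assumes \<Psi>: "\<Psi> holomorphic_on UNIV" and f: "\<And>t. \<Psi> (complex_of_real t) = complex_of_real (f t)"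
    and "a < b" and zero: "\<And>t. a < t \<Longrightarrow> t < b \<Longrightarrow> f t = 0"
  shows "f s = 0"
proof -
  have "complex_of_real a islimpt complex_of_real ` {a<..<b}"
  proof (rule islimpt_isCont_image)
    show "a islimpt {a<..<b}"
      using \<open>a < b\<close> by (rule islimpt_greaterThanLessThan1)
    show "isCont complex_of_real a"
      using isCont_of_real[OF continuous_ident] .
    show "\<forall>\<^sub>F t in at a. complex_of_real t \<noteq> complex_of_real a"
      by (simp add: eventually_at_filter)
  qed
  moreover have "\<Psi> z = 0" if "z \<in> complex_of_real ` {a<..<b}" for z
    using that f zero by auto
  ultimately have "\<Psi> (complex_of_real s) = 0"
    by (rule analytic_continuation[OF \<Psi> open_UNIV connected_UNIV subset_UNIV UNIV_I]) auto
  then show ?thesis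
    by (simp add: f)
qed

lemma has_real_derivative_zero_if_nonneg_and_equal_endpoints:
  fixes f f' :: "real \<Rightarrow> real"
  assumes deriv: "\<And>s. a \<le> s \<Longrightarrow> s \<le> b \<Longrightarrow> (f has_real_derivative f' s) (at s)"
    and nonneg: "\<And>s. a \<le> s \<Longrightarrow> s \<le> b \<Longrightarrow> 0 \<le> f' s"
    and "f a = f b" and t: "a < t" "t < b"
  shows "f' t = 0"
proof -
  have mono: "f s \<le> f s'" if "a \<le> s" "s \<le> s'" "s' \<le> b" for s s'
    using that by (intro DERIV_nonneg_imp_nondecreasing[OF \<open>s \<le> s'\<close>])
      (metis deriv nonneg order_trans)
  have const: "f s = f a" if "a < s" "s < b" for s
    using mono[of a s] mono[of s b] that \<open>f a = f b\<close> by simp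
  have "((\<lambda>_. f a) has_real_derivative 0) (at t)"
    by simp
  then have "(f has_real_derivative 0) (at t)"
    by (rule has_field_derivative_transform_within_open[where S = "{a<..<b}"])
       (use t const in auto)
  then show ?thesis
    using deriv[of t] t DERIV_unique by auto
qed

locale prolate_solution =
  fixes c chi :: real and \<psi> :: "real \<Rightarrow> real"
  assumes has_deriv: "\<And>t. (\<psi> has_real_derivative deriv \<psi> t) (at t)"
    and has_deriv2: "\<And>t. (deriv \<psi> has_real_derivative deriv (deriv \<psi>) t) (at t)"
    and ode: "prolate_ode c chi \<psi>"
begin

definition flux :: "real \<Rightarrow> real" where
  "flux t = (t\<^sup>2 - 1) * deriv \<psi> t"

lemma has_real_derivative_flux:
  "(flux has_real_derivative (chi - c\<^sup>2 * t\<^sup>2) * \<psi> t) (at t)"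
proof -
  have "(flux has_real_derivative 2 * t * deriv \<psi> t + (t\<^sup>2 - 1) * deriv (deriv \<psi>) t) (at t)"
    unfolding flux_def by (auto intro!: derivative_eq_intros has_deriv2 simp: algebra_simps)
  moreover have "2 * t * deriv \<psi> t + (t\<^sup>2 - 1) * deriv (deriv \<psi>) t = (chi - c\<^sup>2 * t\<^sup>2) * \<psi> t"
    using ode unfolding prolate_ode_def by (simp add: algebra_simps)
  ultimately show ?thesis
    by simp
qed

lemma eq_0_if_root_below_turning_point:
  assumes "\<psi> x0 = 0" "c\<^sup>2 * x0\<^sup>2 \<le> chi" and t: "1 < t" "t < x0"
  shows "\<psi> t = 0"
proof -
  define H where "H s = flux s * \<psi> s" for s
  define H' where "H' s = (chi - c\<^sup>2 * s\<^sup>2) * (\<psi> s)\<^sup>2 + (s\<^sup>2 - 1) * (deriv \<psi> s)\<^sup>2" for s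
  have dH: "(H has_real_derivative H' s) (at s)" for s
    unfolding H_def H'_def
    by (rule derivative_eq_intros has_real_derivative_flux has_deriv refl)+
       (simp add: flux_def algebra_simps power2_eq_square)
  have weights: "0 \<le> chi - c\<^sup>2 * s\<^sup>2" "0 \<le> s\<^sup>2 - 1" if "1 \<le> s" "s \<le> x0" for s
  proof -
    have "c\<^sup>2 * s\<^sup>2 \<le> c\<^sup>2 * x0\<^sup>2"
      using that by (intro mult_left_mono power_mono) auto
    then show "0 \<le> chi - c\<^sup>2 * s\<^sup>2"
      using assms(2) by linarith
    show "0 \<le> s\<^sup>2 - 1"
      using that by (simp add: one_le_power)
  qed
  have "H 1 = H x0"
    using assms(1) by (simp add: H_def flux_def)
  have H'_zero: "H' s = 0" if "1 < s" "s < x0" for s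
    using dH weights \<open>H 1 = H x0\<close> that
    by (intro has_real_derivative_zero_if_nonneg_and_equal_endpoints[where f = H and a = 1 and b = x0])
       (auto simp: H'_def)
  have flat: "(\<psi> has_real_derivative 0) (at s)" if "1 < s" "s < x0" for s
  proof -
    have "0 < s\<^sup>2 - 1"
      using that by (simp add: one_less_power)
    moreover have "0 \<le> (chi - c\<^sup>2 * s\<^sup>2) * (\<psi> s)\<^sup>2"
      using weights[of s] that by simp
    ultimately have "deriv \<psi> s = 0"
      using H'_zero[OF that] unfolding H'_def
      by (smt (verit) mult_pos_pos zero_le_power2 zero_less_power2)
    then show ?thesis
      using has_deriv[of s] by simp
  qed
  have "continuous_on {t..x0} \<psi>"
    using has_deriv by (intro continuous_at_imp_continuous_on) (auto intro: DERIV_isCont)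
  then have "\<psi> x0 = \<psi> t"
    by (rule DERIV_isconst_end[OF \<open>t < x0\<close>]) (use t flat in auto)
  then show ?thesis
    using assms(1) by simp
qed

definition weight :: "real \<Rightarrow> real" where
  "weight t = (t\<^sup>2 - 1) * (c\<^sup>2 * t\<^sup>2 - chi)"

definition weight' :: "real \<Rightarrow> real" where
  "weight' t = 2 * t * (c\<^sup>2 * t\<^sup>2 - chi) + 2 * c\<^sup>2 * t * (t\<^sup>2 - 1)"

lemma has_real_derivative_weight: "(weight has_real_derivative weight' t) (at t)"
  unfolding weight_def weight'_def
  by (rule derivative_eq_intros refl)+ (simp add: algebra_simps)

lemma weight_pos_beyond_turning_point:
  assumes "1 < x" "chi < c\<^sup>2 * x\<^sup>2" "x \<le> t"
  shows "0 < t\<^sup>2 - 1" "0 < c\<^sup>2 * t\<^sup>2 - chi" "0 < weight t" "0 \<le> weight' t"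
proof -
  show t1: "0 < t\<^sup>2 - 1"
    using assms by (simp add: one_less_power)
  have "c\<^sup>2 * x\<^sup>2 \<le> c\<^sup>2 * t\<^sup>2"
    using assms by (intro mult_left_mono power_mono) auto
  then show t2: "0 < c\<^sup>2 * t\<^sup>2 - chi"
    using assms(2) by linarith
  show "0 < weight t"
    using t1 t2 by (simp add: weight_def)
  show "0 \<le> weight' t"
    unfolding weight'_def using t1 t2 assms
    by (intro add_nonneg_nonneg mult_nonneg_nonneg) auto
qed

lemma abs_flux_le_at_roots:
  assumes "1 < x" "chi < c\<^sup>2 * x\<^sup>2" "x \<le> y" "\<psi> x = 0" "\<psi> y = 0"
  shows "\<bar>flux x\<bar> \<le> \<bar>flux y\<bar>"
proof -
  define E where "E t = (flux t)\<^sup>2 + weight t * (\<psi> t)\<^sup>2" for t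
  have dE: "(E has_real_derivative weight' t * (\<psi> t)\<^sup>2) (at t)" for t
    unfolding E_def
    by (rule derivative_eq_intros has_real_derivative_flux has_real_derivative_weight has_deriv refl)+
       (simp add: flux_def weight_def algebra_simps power2_eq_square)
  have "E x \<le> E y"
  proof (rule DERIV_nonneg_imp_nondecreasing[OF \<open>x \<le> y\<close>])
    fix t
    assume "x \<le> t" "t \<le> y"
    then have "0 \<le> weight' t * (\<psi> t)\<^sup>2"
      using weight_pos_beyond_turning_point[OF assms(1,2)] by simp
    then show "\<exists>d. (E has_real_derivative d) (at t) \<and> 0 \<le> d"
      using dE by blast
  qed
  then have "(flux x)\<^sup>2 \<le> (flux y)\<^sup>2"
    using assms(4,5) by (simp add: E_def)
  then show ?thesis
    by (simp add: abs_le_square_iff)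
qed

lemma weighted_flux_square_ge_at_roots:
  assumes "1 < x" "chi < c\<^sup>2 * x\<^sup>2" "x \<le> y" "\<psi> x = 0" "\<psi> y = 0"
  shows "(flux y)\<^sup>2 / weight y \<le> (flux x)\<^sup>2 / weight x"
proof -
  define G where "G t = (flux t)\<^sup>2 / weight t + (\<psi> t)\<^sup>2" for t
  have dG: "(G has_real_derivative - ((flux t)\<^sup>2 * weight' t / (weight t)\<^sup>2)) (at t)" if "x \<le> t" for t
  proof -
    have w: "weight t \<noteq> 0"
      using weight_pos_beyond_turning_point[OF assms(1,2) that] by simp
    have "(G has_real_derivative
        2 * flux t * ((chi - c\<^sup>2 * t\<^sup>2) * \<psi> t) / weight t - (flux t)\<^sup>2 * weight' t / (weight t)\<^sup>2
          + 2 * \<psi> t * deriv \<psi> t) (at t)"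
      unfolding G_def
      by (rule derivative_eq_intros has_real_derivative_flux has_real_derivative_weight has_deriv refl w)+
         (use w in \<open>simp add: field_simps power2_eq_square\<close>)
    moreover have "2 * flux t * ((chi - c\<^sup>2 * t\<^sup>2) * \<psi> t) / weight t = - 2 * \<psi> t * deriv \<psi> t"
      using w by (simp add: flux_def weight_def field_simps)
    ultimately show ?thesis
      by simp
  qed
  have "G y \<le> G x"
  proof (rule DERIV_nonpos_imp_nonincreasing[OF \<open>x \<le> y\<close>])
    fix t
    assume "x \<le> t" "t \<le> y"
    then have "0 \<le> (flux t)\<^sup>2 * weight' t / (weight t)\<^sup>2"
      using weight_pos_beyond_turning_point[OF assms(1,2)] by simp
    then show "\<exists>d. (G has_real_derivative d) (at t) \<and> d \<le> 0"
      using dG[OF \<open>x \<le> t\<close>] by force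
  qed
  then show ?thesis
    using assms(4,5) by (simp add: G_def)
qed

lemma abs_deriv_lower_bound_at_roots:
  assumes "1 < x" "chi < c\<^sup>2 * x\<^sup>2" "x \<le> y" "\<psi> x = 0" "\<psi> y = 0"
  shows "\<bar>deriv \<psi> x\<bar> * ((x\<^sup>2 - 1) / (y\<^sup>2 - 1)) \<le> \<bar>deriv \<psi> y\<bar>"
proof -
  have x1: "0 < x\<^sup>2 - 1" and y1: "0 < y\<^sup>2 - 1"
    using weight_pos_beyond_turning_point[OF assms(1,2)] assms(3) by auto
  have "(x\<^sup>2 - 1) * \<bar>deriv \<psi> x\<bar> \<le> (y\<^sup>2 - 1) * \<bar>deriv \<psi> y\<bar>"
    using abs_flux_le_at_roots[OF assms] x1 y1 by (simp add: flux_def abs_mult)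
  then show ?thesis
    using y1 by (simp add: field_simps)
qed

lemma abs_deriv_upper_bound_at_roots:
  assumes "1 < x" "chi < c\<^sup>2 * x\<^sup>2" "x \<le> y" "\<psi> x = 0" "\<psi> y = 0" "c \<noteq> 0"
  shows "\<bar>deriv \<psi> y\<bar> \<le> \<bar>deriv \<psi> x\<bar> *
    sqrt ((x\<^sup>2 - 1) / (x\<^sup>2 - chi / c\<^sup>2) * ((y\<^sup>2 - chi / c\<^sup>2) / (y\<^sup>2 - 1)))"
proof -
  note pos = weight_pos_beyond_turning_point[OF assms(1,2)]
  have x1: "0 < x\<^sup>2 - 1" and y1: "0 < y\<^sup>2 - 1" and xc: "0 < c\<^sup>2 * x\<^sup>2 - chi" and yc: "0 < c\<^sup>2 * y\<^sup>2 - chi"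
    using pos[of x] pos[of y] assms(3) by auto
  have "(y\<^sup>2 - 1) * (deriv \<psi> y)\<^sup>2 / (c\<^sup>2 * y\<^sup>2 - chi) \<le> (x\<^sup>2 - 1) * (deriv \<psi> x)\<^sup>2 / (c\<^sup>2 * x\<^sup>2 - chi)"
    using weighted_flux_square_ge_at_roots[OF assms(1-5)] x1 y1
    by (simp add: flux_def weight_def power2_eq_square ac_simps)
  moreover have "u \<le> v * (p * q / (r * s))"
    if "0 < s" "0 < q" "0 < r" "s * u / q \<le> p * v / r" for p q r s u v :: real
    using that by (simp add: field_simps)
  ultimately have "(deriv \<psi> y)\<^sup>2 \<le> (deriv \<psi> x)\<^sup>2 * ((x\<^sup>2 - 1) * (c\<^sup>2 * y\<^sup>2 - chi) / ((c\<^sup>2 * x\<^sup>2 - chi) * (y\<^sup>2 - 1)))"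
    using y1 yc xc by blast
  also have "(x\<^sup>2 - 1) * (c\<^sup>2 * y\<^sup>2 - chi) / ((c\<^sup>2 * x\<^sup>2 - chi) * (y\<^sup>2 - 1))
      = (x\<^sup>2 - 1) / (x\<^sup>2 - chi / c\<^sup>2) * ((y\<^sup>2 - chi / c\<^sup>2) / (y\<^sup>2 - 1))"
  proof -
    have "t\<^sup>2 - chi / c\<^sup>2 = (c\<^sup>2 * t\<^sup>2 - chi) / c\<^sup>2" for t
      using assms(6) by (simp add: field_simps)
    then show ?thesis
      using assms(6) by simp
  qed
  finally show ?thesis
    by (metis real_sqrt_abs real_sqrt_le_mono real_sqrt_mult)
qed

end

lemma PSWF_prolate_solution:
  assumes "is_PSWF c n \<psi> lam" "prolate_ode c chi \<psi>"
  shows "prolate_solution c chi \<psi>"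
  using real_restriction_of_entire_has_derivatives[OF PSWF_entire_extension[OF assms(1)]] assms(2)
  by unfold_locales

lemma PSWF_root_beyond_turning_point:
  assumes \<psi>: "is_PSWF c n \<psi> lam" and ode: "prolate_ode c chi \<psi>" and "1 < x" "\<psi> x = 0"
  shows "chi < c\<^sup>2 * x\<^sup>2"
proof (rule ccontr)
  assume "\<not> chi < c\<^sup>2 * x\<^sup>2"
  then have "\<psi> t = 0" if "1 < t" "t < x" for t
    using prolate_solution.eq_0_if_root_below_turning_point[OF PSWF_prolate_solution[OF \<psi> ode]]
      assms that by simp
  then have "\<psi> s = 0" for s
    by (rule real_restriction_of_entire_eq_0[OF PSWF_entire_extension[OF \<psi>] \<open>1 < x\<close>])
  then have "integral {-1..1} (\<lambda>t. (\<psi> t)\<^sup>2) = 0"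
    by simp
  with \<psi> show False
    by (simp add: is_PSWF_def)
qed

theorem theorem35:
  fixes c chi x y :: real and n :: nat and \<psi> :: "real \<Rightarrow> real" and lam :: complex
  assumes "c > 0"
    and "is_PSWF c n \<psi> lam"
    and "chi > 0" and "prolate_ode c chi \<psi>"
    and "chi > c\<^sup>2"
    and "1 < x" and "x < y" and "\<psi> x = 0" and "\<psi> y = 0"
  shows "\<bar>deriv \<psi> x\<bar> * ((x\<^sup>2 - 1) / (y\<^sup>2 - 1)) \<le> \<bar>deriv \<psi> y\<bar> \<and>
         \<bar>deriv \<psi> y\<bar> \<le> \<bar>deriv \<psi> x\<bar> *
           sqrt ((x\<^sup>2 - 1) / (x\<^sup>2 - chi / c\<^sup>2) * ((y\<^sup>2 - chi / c\<^sup>2) / (y\<^sup>2 - 1)))"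
proof -
  interpret prolate_solution c chi \<psi>
    using PSWF_prolate_solution assms(2,4) .
  have "chi < c\<^sup>2 * x\<^sup>2"
    using PSWF_root_beyond_turning_point assms(2,4,6,8) .
  note roots = \<open>1 < x\<close> this less_imp_le[OF \<open>x < y\<close>] \<open>\<psi> x = 0\<close> \<open>\<psi> y = 0\<close>
  show ?thesis
    using abs_deriv_lower_bound_at_roots[OF roots] abs_deriv_upper_bound_at_roots[OF roots] \<open>c > 0\<close>
    by simp
qed

end
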